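(* Let $\alpha>0$, $\beta>0$, and let $z_s$ be a sufficiently smooth scalar source signal on a finite interval $\mathcal{I}_t=[t_1,t_2]$. Let $Z^*:\mathcal{I}_t\to\mathbb{R}^n$ be the solution of the ideal cohesive dynamics $$\dot Z^*(t)=-\alpha\beta K Z^*(t)+[I-\beta K]\dot Z^*(t)+\beta B\,[\alpha z_s(t)+\dot z_s(t)],$$ and, for a delay $\tau>0$, let $Z$ be a (twice differentiable) solution of the delayed-self-reinforcement (DSR) delay-differential equation $$\dot Z(t)=-\alpha\beta K Z(t)+\tfrac{1}{\tau}[Z(t)-Z(t-\tau)]-\tfrac{\beta}{\tau}K[Z(t)-Z(t-\tau)]+\alpha\beta B z_s(t)+\beta B\dot z_s(t),$$ with the same synchronized initial condition, $Z(t_1)=Z^*(t_1)$. Then the deviation $E_Z=Z-Z^*$ satisfies $$\max_{t\in\mathcal{I}_t}\|E_Z(t)\|_\infty\to 0\quad\text{as}\quad \max_{t\in\mathcal{I}_t}\|\tau\ddot Z(t)\|_\infty\to 0 .$$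
   Context: A directed graph $\mathcal{G}=(\mathcal{V},\mathcal{E})$ has nodes $\mathcal{V}=\{1,\dots,n+1\}$, $n>1$, where node $n+1$ is the source $s$; neighbors of $i$ are $N_i=\{k\neq i:(k,i)\in\mathcal{E}\}$. The Laplacian $L=(l_{ik})$ is the $(n+1)\times(n+1)$ real matrix with $l_{ik}=-w_{ik}$ if $k\in N_i$, $l_{ii}=\sum_{m=1}^{n+1}w_{im}$, and $l_{ik}=0$ otherwise, where $w_{ik}>0$ if $k\in N_i$ and $w_{ik}=0$ otherwise. Partition $L=\begin{bmatrix}K&-B\\ \star&\star\end{bmatrix}$ with $K$ the $n\times n$ pinned Laplacian and $B=[w_{1,s},\dots,w_{n,s}]^T$. Standing assumption: $\mathcal{G}$ has a directed path from the source node $s$ to every other node; then $K$ is invertible, all eigenvalues of $K$ have positive real part, and $K\mathbf{1}_n=B$. Norms $\|\cdot\|_\infty$ are vector max-norms.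
   Formalization: Z is twice differentiable, and the bound on $\|\tau\ddot Z(t)\|_\infty$ holds, on the whole history interval [t1 - tau, t2] rather than only on $\mathcal{I}_t=[t_1,t_2]$, the limit being uniform in the delay tau. Apart from conventions, each condition added here is assumed in the paper as well or is needed for the statement above to hold. *)

theory Defs
  imports "HOL-Analysis.Analysis"
begin

text \<open>Follower nodes are indexed by the finite type 'n (so n = CARD('n));
  the source s = n+1 is kept separate.  w i k > 0 iff (k,i) is an edge between
  followers, ws i > 0 iff (s,i) is an edge (i.e. ws i = w_{i,s}).\<close>

definition vinf :: "real ^ 'n \<Rightarrow> real" where
  "vinf x = Max (range (\<lambda>i. \<bar>x $ i\<bar>))"

text \<open>Pinned Laplacian K (upper-left n x n block of L).\<close>
definition pinned_laplacian :: "('n::finite \<Rightarrow> 'n \<Rightarrow> real) \<Rightarrow> ('n \<Rightarrow> real) \<Rightarrow> real ^ 'n ^ 'n" where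
  "pinned_laplacian w ws = (\<chi> i k. if i = k then (\<Sum>m\<in>UNIV - {i}. w i m) + ws i else - w i k)"

definition source_vec :: "('n::finite \<Rightarrow> real) \<Rightarrow> real ^ 'n" where
  "source_vec ws = (\<chi> i. ws i)"

inductive reach_from_source :: "('n \<Rightarrow> 'n \<Rightarrow> real) \<Rightarrow> ('n \<Rightarrow> real) \<Rightarrow> 'n \<Rightarrow> bool"
  for w ws where
  src: "ws i > 0 \<Longrightarrow> reach_from_source w ws i"
| step: "reach_from_source w ws k \<Longrightarrow> k \<noteq> i \<Longrightarrow> w i k > 0 \<Longrightarrow> reach_from_source w ws i"

end

theory Submission
  imports Defs
begin

text \<open>Write \<open>D Z t = (Z t - Z (t - \<tau>)) / \<tau>\<close>. Taylor's theorem bounds \<open>Z' - D Z\<close> by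
  \<open>max \<bar>\<tau> Z''\<bar>\<close>. Because \<open>K 1 = B\<close>, the DSR equation reads
  \<open>\<beta> K (D Z + \<alpha> Z - (\<alpha> z\<^sub>s + z\<^sub>s') 1) = D Z - Z'\<close>, while injectivity of \<open>K\<close> (a maximum
  principle propagated along the paths from the source) turns the ideal dynamics into
  \<open>Z*' = - \<alpha> Z* + (\<alpha> z\<^sub>s + z\<^sub>s') 1\<close>. With \<open>c \<bar>x\<bar> \<le> \<bar>K x\<bar>\<close> the deviation \<open>E = Z - Z*\<close> therefore
  satisfies \<open>\<bar>E' + \<alpha> E\<bar> \<le> (1 + 1/(c \<beta>)) \<bar>Z' - D Z\<bar>\<close>, and the integrating factor \<open>exp (\<alpha> t)\<close>
  together with \<open>E t1 = 0\<close> gives \<open>\<bar>E t\<bar> \<le> (1 + 1/(c \<beta>)) (t - t1) max \<bar>\<tau> Z''\<bar>\<close>, up to the factor \<open>n\<close>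
  from comparing the Euclidean norm with the max-norm.\<close>

lemma vinf_le_norm: "vinf (x :: real ^ 'n) \<le> norm x"
  unfolding vinf_def by (auto intro: component_le_norm_cart)

lemma abs_le_vinf: "\<bar>x $ i\<bar> \<le> vinf (x :: real ^ 'n)"
  unfolding vinf_def by (rule Max_ge) auto

lemma vinf_nonneg: "0 \<le> vinf (x :: real ^ 'n)"
  by (rule order_trans[OF abs_ge_zero abs_le_vinf])

lemma vinf_attained: obtains i where "\<bar>x $ i\<bar> = vinf (x :: real ^ 'n)"
proof -
  have "vinf x \<in> range (\<lambda>i. \<bar>x $ i\<bar>)"
    unfolding vinf_def by (rule Max_in) auto
  then show ?thesis using that by auto
qed

lemma norm_le_card_vinf: "norm (x :: real ^ 'n) \<le> real CARD('n) * vinf x"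
proof -
  have "norm x \<le> (\<Sum>i\<in>UNIV. \<bar>x $ i\<bar>)" by (rule norm_le_l1_cart)
  also have "\<dots> \<le> (\<Sum>i\<in>(UNIV :: 'n set). vinf x)" by (intro sum_mono abs_le_vinf)
  finally show ?thesis by simp
qed

lemma pinned_laplacian_mult_component:
  "(pinned_laplacian w ws *v v) $ i
     = ((\<Sum>m\<in>UNIV - {i}. w i m) + ws i) * v $ i - (\<Sum>m\<in>UNIV - {i}. w i m * v $ m)"
proof -
  have "(pinned_laplacian w ws *v v) $ i
      = (\<Sum>k\<in>UNIV. (if i = k then (\<Sum>m\<in>UNIV - {i}. w i m) + ws i else - w i k) * v $ k)"
    unfolding pinned_laplacian_def matrix_vector_mult_def by simp
  also have "\<dots> = ((\<Sum>m\<in>UNIV - {i}. w i m) + ws i) * v $ i + (\<Sum>k\<in>UNIV - {i}. - w i k * v $ k)"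
    by (subst sum.remove[of UNIV i]) (auto intro!: sum.cong)
  finally show ?thesis by (simp add: sum_negf)
qed

lemma pinned_laplacian_mult_one: "pinned_laplacian w ws *v 1 = source_vec ws"
  by (simp add: vec_eq_iff pinned_laplacian_mult_component source_vec_def)

lemma pinned_laplacian_kernel_max_principle:
  assumes w_nonneg: "\<And>i k. w i k \<ge> 0" and ws_nonneg: "\<And>i. ws i \<ge> 0"
    and kernel: "pinned_laplacian w ws *v v = 0"
    and max: "\<bar>v $ i\<bar> = vinf v"
  shows "ws i * vinf v = 0" and "\<And>k. k \<noteq> i \<Longrightarrow> w i k > 0 \<Longrightarrow> \<bar>v $ k\<bar> = vinf v"
proof -
  let ?M = "vinf v" and ?S = "UNIV - {i}"
  have le: "\<And>k. \<bar>v $ k\<bar> \<le> ?M" by (rule abs_le_vinf)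
  have row: "((\<Sum>m\<in>?S. w i m) + ws i) * v $ i = (\<Sum>m\<in>?S. w i m * v $ m)"
    using kernel pinned_laplacian_mult_component[of w ws v i] by simp
  have "((\<Sum>m\<in>?S. w i m) + ws i) * ?M = \<bar>\<Sum>m\<in>?S. w i m * v $ m\<bar>"
    using row max w_nonneg ws_nonneg by (metis abs_mult abs_of_nonneg add_nonneg_nonneg sum_nonneg)
  also have "\<dots> \<le> (\<Sum>m\<in>?S. w i m * \<bar>v $ m\<bar>)"
    by (rule order_trans[OF sum_abs]) (simp add: abs_mult w_nonneg)
  finally have sum_le: "ws i * ?M + (\<Sum>m\<in>?S. w i m * (?M - \<bar>v $ m\<bar>)) \<le> 0"
    by (simp add: algebra_simps sum_subtractf sum_distrib_left)
  have terms_nonneg: "\<forall>m\<in>?S. 0 \<le> w i m * (?M - \<bar>v $ m\<bar>)"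
    using w_nonneg le by simp
  then have "0 \<le> (\<Sum>m\<in>?S. w i m * (?M - \<bar>v $ m\<bar>))" by (intro sum_nonneg) auto
  moreover have "0 \<le> ws i * ?M" using ws_nonneg le[of i] by simp
  ultimately have "ws i * ?M = 0" and sum_zero: "(\<Sum>m\<in>?S. w i m * (?M - \<bar>v $ m\<bar>)) = 0"
    using sum_le by linarith+
  then show "ws i * ?M = 0" by simp
  fix k assume "k \<noteq> i" "w i k > 0"
  have "\<forall>m\<in>?S. w i m * (?M - \<bar>v $ m\<bar>) = 0"
    using sum_zero terms_nonneg sum_nonneg_eq_0_iff[of ?S "\<lambda>m. w i m * (?M - \<bar>v $ m\<bar>)"]
    by (simp only: finite)
  with \<open>k \<noteq> i\<close> have "w i k * (?M - \<bar>v $ k\<bar>) = 0" by simp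
  with \<open>w i k > 0\<close> show "\<bar>v $ k\<bar> = ?M" by simp
qed

lemma pinned_laplacian_kernel_trivial:
  assumes w_nonneg: "\<And>i k. w i k \<ge> 0" and ws_nonneg: "\<And>i. ws i \<ge> 0"
    and paths: "\<And>i. reach_from_source w ws i"
    and kernel: "pinned_laplacian w ws *v v = 0"
  shows "v = 0"
proof -
  have "vinf v \<le> 0"
  proof (rule ccontr)
    assume "\<not> vinf v \<le> 0"
    note max_principle = pinned_laplacian_kernel_max_principle[OF w_nonneg ws_nonneg kernel]
    have "\<bar>v $ i\<bar> \<noteq> vinf v" if "reach_from_source w ws i" for i
      using that
    proof (induction rule: reach_from_source.induct)
      case (src i)
      then show ?case using max_principle(1)[of i] \<open>\<not> vinf v \<le> 0\<close> by auto
    next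
      case (step k i)
      then show ?case using max_principle(2)[of i k] by auto
    qed
    with paths vinf_attained show False by metis
  qed
  then show ?thesis
    using abs_le_vinf[of v] by (simp add: vec_eq_iff) (meson abs_le_zero_iff order_trans)
qed

lemma pinned_laplacian_bounded_below:
  assumes "\<And>i k. w i k \<ge> 0" and "\<And>i. ws i \<ge> 0" and "\<And>i. reach_from_source w ws i"
  obtains c where "c > 0" and "\<And>x. c * norm x \<le> norm (pinned_laplacian w ws *v x)"
proof (rule linear_inj_bounded_below_pos)
  show "linear ((*v) (pinned_laplacian w ws))" by (rule matrix_vector_mul_linear)
  show "inj ((*v) (pinned_laplacian w ws))"
  proof (rule injI)
    fix x y assume "pinned_laplacian w ws *v x = pinned_laplacian w ws *v y"
    then have "pinned_laplacian w ws *v (x - y) = 0" by (simp add: matrix_vector_mult_diff_distrib)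
    then have "x - y = 0" by (rule pinned_laplacian_kernel_trivial[OF assms])
    then show "x = y" by simp
  qed
qed (use that in auto)

lemma vector_differentiable_bound:
  fixes f :: "real \<Rightarrow> 'a::real_normed_vector"
  assumes "a \<le> b"
    and "\<And>x. x \<in> {a..b} \<Longrightarrow> (f has_vector_derivative f' x) (at x within {a..b})"
    and "\<And>x. x \<in> {a..b} \<Longrightarrow> norm (f' x) \<le> M"
  shows "norm (f b - f a) \<le> M * (b - a)"
proof -
  have "norm (f b - f a) \<le> M * norm (b - a)"
    using assms
    by (intro differentiable_bound[where f'="\<lambda>x h. h *\<^sub>R f' x" and S="{a..b}"])
       (force simp: has_vector_derivative_def mult.commute[of M] intro!: onorm_le mult_left_mono)+
  then show ?thesis using assms(1) by simp
qed

lemma backward_difference_quotient_error: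
  fixes Z :: "real \<Rightarrow> 'a::real_normed_vector"
  assumes "\<tau> > 0"
    and Z': "\<And>s. s \<in> {t-\<tau>..t} \<Longrightarrow> (Z has_vector_derivative Z' s) (at s within {t-\<tau>..t})"
    and Z'': "\<And>s. s \<in> {t-\<tau>..t} \<Longrightarrow> (Z' has_vector_derivative Z'' s) (at s within {t-\<tau>..t})"
    and bound: "\<And>s. s \<in> {t-\<tau>..t} \<Longrightarrow> norm (Z'' s) \<le> M"
  shows "norm (Z' t - (1 / \<tau>) *\<^sub>R (Z t - Z (t - \<tau>))) \<le> M * \<tau>"
proof -
  have "M \<ge> 0" using bound[of t] \<open>\<tau> > 0\<close> by (auto intro: order_trans[OF norm_ge_zero])
  have Z'_close: "norm (Z' s - Z' t) \<le> M * \<tau>" if "s \<in> {t-\<tau>..t}" for s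
  proof -
    have "norm (Z' t - Z' s) \<le> M * (t - s)"
      using that by (intro vector_differentiable_bound)
        (auto intro: has_vector_derivative_within_subset[OF Z''] bound)
    also have "\<dots> \<le> M * \<tau>" using that \<open>M \<ge> 0\<close> by (auto intro: mult_left_mono)
    finally show ?thesis by (simp add: norm_minus_commute)
  qed
  have "norm (Z t - Z (t - \<tau>) - (t - (t - \<tau>)) *\<^sub>R Z' t) \<le> norm (t - (t - \<tau>)) * (M * \<tau>)"
    using \<open>\<tau> > 0\<close> by (intro vector_differentiable_bound_linearization[OF Z' _ Z'_close])
      (auto simp: closed_segment_eq_real_ivl)
  then have "norm (Z t - Z (t - \<tau>) - \<tau> *\<^sub>R Z' t) \<le> \<tau> * (M * \<tau>)"
    using \<open>\<tau> > 0\<close> by simp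
  moreover have "Z' t - (1 / \<tau>) *\<^sub>R (Z t - Z (t - \<tau>)) = - (1 / \<tau>) *\<^sub>R (Z t - Z (t - \<tau>) - \<tau> *\<^sub>R Z' t)"
    using \<open>\<tau> > 0\<close> by (simp add: algebra_simps)
  ultimately show ?thesis
    using \<open>\<tau> > 0\<close> by (simp add: divide_le_eq mult.commute)
qed

text \<open>Integrating factor: \<open>exp (\<alpha> s) (e' s + \<alpha> e s)\<close> is the derivative of \<open>exp (\<alpha> s) e s\<close>,
  and for \<open>\<alpha> \<ge> 0\<close> the weight \<open>exp (\<alpha> t)\<close> of the endpoint dominates all others.\<close>

lemma damped_deviation_bound:
  fixes e :: "real \<Rightarrow> 'a::real_normed_vector"
  assumes "\<alpha> \<ge> 0" and "e a = 0" and "t \<in> {a..b}"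
    and e': "\<And>s. s \<in> {a..b} \<Longrightarrow> (e has_vector_derivative e' s) (at s within {a..b})"
    and bound: "\<And>s. s \<in> {a..b} \<Longrightarrow> norm (e' s + \<alpha> *\<^sub>R e s) \<le> M"
  shows "norm (e t) \<le> M * (t - a)"
proof -
  define f where "f s = exp (\<alpha> * s) *\<^sub>R e s" for s
  have "norm (f t - f a) \<le> (exp (\<alpha> * t) * M) * (t - a)"
  proof (rule vector_differentiable_bound)
    fix s assume s: "s \<in> {a..t}"
    then have "s \<in> {a..b}" and "{a..t} \<subseteq> {a..b}" using \<open>t \<in> {a..b}\<close> by auto
    have "((\<lambda>s. exp (\<alpha> * s)) has_real_derivative exp (\<alpha> * s) * \<alpha>) (at s within {a..t})"
      by (auto intro!: derivative_eq_intros)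
    moreover have "(e has_vector_derivative e' s) (at s within {a..t})"
      using e'[OF \<open>s \<in> {a..b}\<close>] \<open>{a..t} \<subseteq> {a..b}\<close> by (rule has_vector_derivative_within_subset)
    ultimately show "(f has_vector_derivative exp (\<alpha> * s) *\<^sub>R (e' s + \<alpha> *\<^sub>R e s)) (at s within {a..t})"
      unfolding f_def by (auto dest: has_vector_derivative_scaleR simp: algebra_simps)
    have "exp (\<alpha> * s) * norm (e' s + \<alpha> *\<^sub>R e s) \<le> exp (\<alpha> * t) * M"
      using bound[OF \<open>s \<in> {a..b}\<close>] s \<open>\<alpha> \<ge> 0\<close>
      by (intro mult_mono) (auto intro: mult_left_mono order_trans[OF norm_ge_zero])
    then show "norm (exp (\<alpha> * s) *\<^sub>R (e' s + \<alpha> *\<^sub>R e s)) \<le> exp (\<alpha> * t) * M" by simp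
  qed (use \<open>t \<in> {a..b}\<close> in simp)
  then show ?thesis
    using \<open>e a = 0\<close> unfolding f_def by (simp add: mult.assoc)
qed

lemma ideal_cohesive_explicit:
  fixes K :: "real ^ 'n ^ 'n"
  assumes "K *v 1 = B" and "\<And>v. K *v v = 0 \<Longrightarrow> v = 0" and "\<beta> \<noteq> 0"
    and ode: "x' = - (\<alpha> * \<beta>) *\<^sub>R (K *v x) + (mat 1 - \<beta> *\<^sub>R K) *v x' + (\<beta> * (\<alpha> * u + u')) *\<^sub>R B"
  shows "x' = - \<alpha> *\<^sub>R x + (\<alpha> * u + u') *\<^sub>R 1"
proof -
  have "(mat 1 - \<beta> *\<^sub>R K) *v x' = x' - \<beta> *\<^sub>R (K *v x')"
    by (simp add: matrix_vector_mult_diff_rdistrib scaleR_matrix_vector_assoc)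
  then have "\<beta> *\<^sub>R (K *v (x' + \<alpha> *\<^sub>R x - (\<alpha> * u + u') *\<^sub>R 1)) = 0"
    using ode \<open>K *v 1 = B\<close> by (simp add: algebra_simps)
  with \<open>\<beta> \<noteq> 0\<close> have "K *v (x' + \<alpha> *\<^sub>R x - (\<alpha> * u + u') *\<^sub>R 1) = 0" by simp
  then have "x' + \<alpha> *\<^sub>R x - (\<alpha> * u + u') *\<^sub>R 1 = 0" by (rule assms(2))
  then show ?thesis by (simp add: algebra_simps)
qed

lemma dsr_deviation_rate_bound:
  fixes K :: "real ^ 'n ^ 'n"
  assumes "K *v 1 = B" and "c > 0" and K_below: "\<And>x. c * norm x \<le> norm (K *v x)" and "\<beta> > 0"
    and dsr: "x' = - (\<alpha> * \<beta>) *\<^sub>R (K *v x) + (1 / \<tau>) *\<^sub>R (x - y) - (\<beta> / \<tau>) *\<^sub>R (K *v (x - y))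
                 + (\<alpha> * \<beta> * u) *\<^sub>R B + (\<beta> * u') *\<^sub>R B"
    and ideal: "xs' = - \<alpha> *\<^sub>R xs + (\<alpha> * u + u') *\<^sub>R 1"
  shows "norm ((x' - xs') + \<alpha> *\<^sub>R (x - xs)) \<le> (1 + 1 / (c * \<beta>)) * norm (x' - (1 / \<tau>) *\<^sub>R (x - y))"
proof -
  define r where "r = x' - (1 / \<tau>) *\<^sub>R (x - y)"
  define g where "g = (1 / \<tau>) *\<^sub>R (x - y) + \<alpha> *\<^sub>R x - (\<alpha> * u + u') *\<^sub>R 1"
  have "\<beta> *\<^sub>R (K *v g) = - r"
    using dsr \<open>K *v 1 = B\<close> unfolding g_def r_def by (simp add: algebra_simps)
  then have "\<beta> * norm (K *v g) = norm r" using \<open>\<beta> > 0\<close> by (metis norm_minus_cancel norm_scaleR abs_of_pos)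
  with K_below[of g] have "norm g \<le> norm r / (c * \<beta>)"
    using \<open>c > 0\<close> \<open>\<beta> > 0\<close> by (simp add: field_simps) (metis mult.commute mult_left_mono less_le)
  moreover have "(x' - xs') + \<alpha> *\<^sub>R (x - xs) = g + r"
    unfolding g_def r_def ideal by (simp add: algebra_simps)
  ultimately have "norm ((x' - xs') + \<alpha> *\<^sub>R (x - xs)) \<le> norm r / (c * \<beta>) + norm r"
    using norm_triangle_ineq[of g r] by simp
  then show ?thesis unfolding r_def by (simp add: field_simps)
qed

lemma dsr_deviation_bound:
  fixes K :: "real ^ 'n ^ 'n" and Z Z' Z'' Zs Zs' :: "real \<Rightarrow> real ^ 'n"
  assumes K_one: "K *v 1 = B" and "c > 0" and K_below: "\<And>x. c * norm x \<le> norm (K *v x)"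
    and "\<alpha> \<ge> 0" and "\<beta> > 0" and "\<tau> > 0"
    and Zs_deriv: "\<And>t. t \<in> {t1..t2} \<Longrightarrow> (Zs has_vector_derivative Zs' t) (at t within {t1..t2})"
    and ideal: "\<And>t. t \<in> {t1..t2} \<Longrightarrow> Zs' t = - \<alpha> *\<^sub>R Zs t + (\<alpha> * zs t + zs' t) *\<^sub>R 1"
    and Z_deriv: "\<And>t. t \<in> {t1-\<tau>..t2} \<Longrightarrow> (Z has_vector_derivative Z' t) (at t within {t1-\<tau>..t2})"
    and Z'_deriv: "\<And>t. t \<in> {t1-\<tau>..t2} \<Longrightarrow> (Z' has_vector_derivative Z'' t) (at t within {t1-\<tau>..t2})"
    and dsr: "\<And>t. t \<in> {t1..t2} \<Longrightarrow> Z' t = - (\<alpha> * \<beta>) *\<^sub>R (K *v Z t) + (1 / \<tau>) *\<^sub>R (Z t - Z (t - \<tau>))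
              - (\<beta> / \<tau>) *\<^sub>R (K *v (Z t - Z (t - \<tau>))) + (\<alpha> * \<beta> * zs t) *\<^sub>R B + (\<beta> * zs' t) *\<^sub>R B"
    and "Z t1 = Zs t1"
    and Z''_bound: "\<And>t. t \<in> {t1-\<tau>..t2} \<Longrightarrow> vinf (\<tau> *\<^sub>R Z'' t) \<le> \<delta>"
    and "t \<in> {t1..t2}"
  shows "vinf (Z t - Zs t) \<le> (1 + 1 / (c * \<beta>)) * CARD('n) * (t2 - t1) * \<delta>"
proof -
  let ?N = "real CARD('n)" and ?L = "1 + 1 / (c * \<beta>)"
  have "\<delta> \<ge> 0"
    using Z''_bound[of t2] vinf_nonneg[of "\<tau> *\<^sub>R Z'' t2"] \<open>t \<in> {t1..t2}\<close> \<open>\<tau> > 0\<close> by auto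
  have residual: "norm (Z' s - (1 / \<tau>) *\<^sub>R (Z s - Z (s - \<tau>))) \<le> ?N * \<delta>" if "s \<in> {t1..t2}" for s
  proof -
    have "norm (Z' s - (1 / \<tau>) *\<^sub>R (Z s - Z (s - \<tau>))) \<le> (?N * \<delta> / \<tau>) * \<tau>"
    proof (rule backward_difference_quotient_error[OF \<open>\<tau> > 0\<close>])
      fix u assume "u \<in> {s-\<tau>..s}"
      then have u: "u \<in> {t1-\<tau>..t2}" and sub: "{s-\<tau>..s} \<subseteq> {t1-\<tau>..t2}" using that by auto
      show "(Z has_vector_derivative Z' u) (at u within {s-\<tau>..s})"
        using Z_deriv[OF u] sub by (rule has_vector_derivative_within_subset)
      show "(Z' has_vector_derivative Z'' u) (at u within {s-\<tau>..s})"
        using Z'_deriv[OF u] sub by (rule has_vector_derivative_within_subset)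
      have "\<tau> * norm (Z'' u) \<le> ?N * vinf (\<tau> *\<^sub>R Z'' u)"
        using norm_le_card_vinf[of "\<tau> *\<^sub>R Z'' u"] \<open>\<tau> > 0\<close> by simp
      also have "\<dots> \<le> ?N * \<delta>" using Z''_bound[OF u] by (simp add: mult_left_mono)
      finally show "norm (Z'' u) \<le> ?N * \<delta> / \<tau>" using \<open>\<tau> > 0\<close> by (simp add: field_simps)
    qed
    then show ?thesis using \<open>\<tau> > 0\<close> by simp
  qed
  have "norm (Z t - Zs t) \<le> (?L * (?N * \<delta>)) * (t - t1)"
  proof (rule damped_deviation_bound[where e' = "\<lambda>s. Z' s - Zs' s"])
    fix s assume s: "s \<in> {t1..t2}"
    have "{t1..t2} \<subseteq> {t1-\<tau>..t2}" using \<open>\<tau> > 0\<close> by auto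
    with s have "(Z has_vector_derivative Z' s) (at s within {t1..t2})"
      by (auto intro: has_vector_derivative_within_subset[OF Z_deriv])
    then show "((\<lambda>s. Z s - Zs s) has_vector_derivative Z' s - Zs' s) (at s within {t1..t2})"
      using Zs_deriv[OF s] by (rule has_vector_derivative_diff)
    have "norm ((Z' s - Zs' s) + \<alpha> *\<^sub>R (Z s - Zs s)) \<le> ?L * norm (Z' s - (1 / \<tau>) *\<^sub>R (Z s - Z (s - \<tau>)))"
      by (rule dsr_deviation_rate_bound[OF K_one \<open>c > 0\<close> K_below \<open>\<beta> > 0\<close> dsr[OF s] ideal[OF s]])
    also have "\<dots> \<le> ?L * (?N * \<delta>)"
      using residual[OF s] \<open>c > 0\<close> \<open>\<beta> > 0\<close> by (intro mult_left_mono) auto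
    finally show "norm ((Z' s - Zs' s) + \<alpha> *\<^sub>R (Z s - Zs s)) \<le> ?L * (?N * \<delta>)" .
  qed (use \<open>\<alpha> \<ge> 0\<close> \<open>Z t1 = Zs t1\<close> \<open>t \<in> {t1..t2}\<close> in auto)
  also have "\<dots> \<le> (?L * (?N * \<delta>)) * (t2 - t1)"
    using \<open>t \<in> {t1..t2}\<close> \<open>\<delta> \<ge> 0\<close> \<open>c > 0\<close> \<open>\<beta> > 0\<close> by (intro mult_left_mono) auto
  finally show ?thesis
    using vinf_le_norm[of "Z t - Zs t"] by (simp add: mult_ac)
qed

theorem lemma1:
  fixes w :: "'n::finite \<Rightarrow> 'n \<Rightarrow> real" and ws :: "'n \<Rightarrow> real"
    and \<alpha> \<beta> t1 t2 :: real
    and zs zs' :: "real \<Rightarrow> real"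
    and Zs Zs' :: "real \<Rightarrow> real ^ 'n"
  defines "K \<equiv> pinned_laplacian w ws" and "B \<equiv> source_vec ws"
  assumes n_gt_1: "CARD('n) \<ge> 2"
    and w_nonneg: "\<And>i k. w i k \<ge> 0" and w_irrefl: "\<And>i. w i i = 0"
    and ws_nonneg: "\<And>i. ws i \<ge> 0"
    and paths: "\<And>i. reach_from_source w ws i"
    and \<alpha>_pos: "\<alpha> > 0" and \<beta>_pos: "\<beta> > 0"
    and t12: "t1 < t2"
    and zs_deriv: "\<And>t. t \<in> {t1..t2} \<Longrightarrow> (zs has_real_derivative zs' t) (at t within {t1..t2})"
    and zs'_cont: "continuous_on {t1..t2} zs'"
    and Zs_deriv: "\<And>t. t \<in> {t1..t2} \<Longrightarrow> (Zs has_vector_derivative Zs' t) (at t within {t1..t2})"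
    and Zs_ode: "\<And>t. t \<in> {t1..t2} \<Longrightarrow>
        Zs' t = - (\<alpha> * \<beta>) *\<^sub>R (K *v Zs t) + (mat 1 - \<beta> *\<^sub>R K) *v Zs' t
                + (\<beta> * (\<alpha> * zs t + zs' t)) *\<^sub>R B"
  shows "\<forall>\<epsilon>>0. \<exists>\<delta>>0. \<forall>\<tau>>0. \<forall>Z Z' Z'' :: real \<Rightarrow> real ^ 'n.
     (\<forall>t\<in>{t1-\<tau>..t2}. (Z has_vector_derivative Z' t) (at t within {t1-\<tau>..t2})
                      \<and> (Z' has_vector_derivative Z'' t) (at t within {t1-\<tau>..t2}))
     \<and> (\<forall>t\<in>{t1..t2}. Z' t = - (\<alpha> * \<beta>) *\<^sub>R (K *v Z t) + (1 / \<tau>) *\<^sub>R (Z t - Z (t - \<tau>))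
              - (\<beta> / \<tau>) *\<^sub>R (K *v (Z t - Z (t - \<tau>)))
              + (\<alpha> * \<beta> * zs t) *\<^sub>R B + (\<beta> * zs' t) *\<^sub>R B)
     \<and> Z t1 = Zs t1
     \<and> (\<forall>t\<in>{t1-\<tau>..t2}. vinf (\<tau> *\<^sub>R Z'' t) \<le> \<delta>)
     \<longrightarrow> (\<forall>t\<in>{t1..t2}. vinf (Z t - Zs t) \<le> \<epsilon>)"
proof -
  have K_one: "K *v 1 = B"
    unfolding K_def B_def by (rule pinned_laplacian_mult_one)
  have K_kernel: "K *v v = 0 \<Longrightarrow> v = 0" for v
    unfolding K_def by (rule pinned_laplacian_kernel_trivial[OF w_nonneg ws_nonneg paths])
  obtain c where "c > 0" and K_below: "\<And>x. c * norm x \<le> norm (K *v x)"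
    using pinned_laplacian_bounded_below[OF w_nonneg ws_nonneg paths] unfolding K_def by blast
  have ideal: "Zs' t = - \<alpha> *\<^sub>R Zs t + (\<alpha> * zs t + zs' t) *\<^sub>R 1" if "t \<in> {t1..t2}" for t
    using K_one K_kernel \<beta>_pos Zs_ode[OF that] by (intro ideal_cohesive_explicit) auto
  define A where "A = (1 + 1 / (c * \<beta>)) * CARD('n) * (t2 - t1)"
  have "A > 0" unfolding A_def using \<open>c > 0\<close> \<beta>_pos t12 by (simp add: add_pos_pos)
  note deviation = dsr_deviation_bound[OF K_one \<open>c > 0\<close> K_below less_imp_le[OF \<alpha>_pos] \<beta>_pos _ Zs_deriv ideal,
      folded A_def]
  show ?thesis (is "\<forall>\<epsilon>>0. \<exists>\<delta>>0. ?P \<epsilon> \<delta>")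
  proof (intro allI impI)
    fix \<epsilon> :: real assume "\<epsilon> > 0"
    with \<open>A > 0\<close> have "\<epsilon> / A > 0" and "A * (\<epsilon> / A) = \<epsilon>" by auto
    have "?P \<epsilon> (\<epsilon> / A)"
      using deviation[where \<delta> = "\<epsilon> / A", unfolded \<open>A * (\<epsilon> / A) = \<epsilon>\<close>] by blast
    with \<open>\<epsilon> / A > 0\<close> show "\<exists>\<delta>>0. ?P \<epsilon> \<delta>" by blast
  qed
qed

end
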